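(* Suppose $a=1$ (so the actual beliefs are updated by the min-protocol at every time step) and conditions (i)–(iii) hold: (i) for every pair of distinct hypotheses $\theta_p,\theta_q$, $\mathcal{S}(\theta_p,\theta_q)\neq\emptyset$; (ii) $\mathcal{G}$ is strongly connected; (iii) $\pi_{i,0}(\theta)>0,\mu_{i,0}(\theta)>0$ for all $i,\theta$. Then for every $i\in\mathcal{V}$, $\mu_{i,t}(\theta^\star)\to1$ a.s., and for every $i\in\mathcal{V}$ and every $\theta\in\Theta\setminus\{\theta^\star\}$, $$\liminf_{t\to\infty}-\frac{\log\mu_{i,t}(\theta)}{t}\ \ge\ \max_{v\in\mathcal{S}(\theta^\star,\theta)}K_v(\theta^\star,\theta)\quad\text{a.s.}$$
   Context: Agents $\mathcal{V}=\{1,\dots,n\}$ interact over a directed graph $\mathcal{G}=(\mathcal{V},\mathcal{E})$; $(j,i)\in\mathcal{E}$ means $j$ can send information to $i$, and $\mathcal{N}_i=\{j:(j,i)\in\mathcal{E}\}$. $\Theta=\{\theta_1,\dots,\theta_m\}$ is a finite set of hypotheses, $\theta^\star\in\Theta$ the fixed true state. Each agent $i$ has a finite signal space $\mathcal{S}_i$ and known marginal likelihoods $l_i(\cdot|\theta)$ of a joint likelihood $l(\cdot|\theta)$ on $\mathcal{S}_1\times\cdots\times\mathcal{S}_n$, with $l_i(w_i|\theta)>0$ for all $w_i,\theta$. Signal profiles $s_t$, $t\in\mathbb{N}_+$, are i.i.d. over time with law $l(\cdot|\theta^\star)$ (possibly correlated across agents); agent $i$ sees $s_{i,t}$. "a.s."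 refers to the product measure $\mathbb{P}^{\theta^\star}$ on sequences of profiles. $K_i(\theta_p,\theta_q)=D(l_i(\cdot|\theta_p)\|l_i(\cdot|\theta_q))$ (KL divergence); $\mathcal{S}(\theta_p,\theta_q)=\{i:K_i(\theta_p,\theta_q)>0\}$. Rule with $a=1$: for all $t\in\mathbb{N}$, $\pi_{i,t+1}(\theta)=\dfrac{l_i(s_{i,t+1}|\theta)\pi_{i,t}(\theta)}{\sum_{p}l_i(s_{i,t+1}|\theta_p)\pi_{i,t}(\theta_p)}$ and $\mu_{i,t+1}(\theta)=\dfrac{\min\{\{\mu_{j,t}(\theta)\}_{j\in\mathcal{N}_i},\pi_{i,t+1}(\theta)\}}{\sum_{p}\min\{\{\mu_{j,t}(\theta_p)\}_{j\in\mathcal{N}_i},\pi_{i,t+1}(\theta_p)\}}$, with initial probability vectors $\boldsymbol\pi_{i,0},\boldsymbol\mu_{i,0}$. *)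

theory Defs
  imports "HOL-Probability.Probability"
begin

text \<open>Signal profiles are functions from agents 'v to a finite signal alphabet 'sig;
  agent i's signal space is S i. L \<theta> is the joint likelihood l(.|\<theta>).\<close>

definition marg_lik :: "('h \<Rightarrow> ('v \<Rightarrow> 'sig) pmf) \<Rightarrow> 'v \<Rightarrow> 'h \<Rightarrow> 'sig \<Rightarrow> real" where
  "marg_lik L i \<theta> w = pmf (map_pmf (\<lambda>s. s i) (L \<theta>)) w"

definition KLdiv :: "('h \<Rightarrow> ('v \<Rightarrow> 'sig) pmf) \<Rightarrow> ('v \<Rightarrow> 'sig set) \<Rightarrow> 'v \<Rightarrow> 'h \<Rightarrow> 'h \<Rightarrow> real" where
  "KLdiv L S i p q = (\<Sum>w\<in>S i. marg_lik L i p w * ln (marg_lik L i p w / marg_lik L i q w))"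

definition informative_agents ::
  "('h \<Rightarrow> ('v \<Rightarrow> 'sig) pmf) \<Rightarrow> ('v \<Rightarrow> 'sig set) \<Rightarrow> 'h \<Rightarrow> 'h \<Rightarrow> 'v set" where
  "informative_agents L S p q = {i. KLdiv L S i p q > 0}"

definition in_nbrs :: "('v \<times> 'v) set \<Rightarrow> 'v \<Rightarrow> 'v set" where
  "in_nbrs E i = {j. (j, i) \<in> E}"

text \<open>Belief dynamics with a = 1. \<open>beliefs \<dots> t = (\<pi>_t, \<mu>_t)\<close>; the signal profile
  s_{t+1} is \<open>\<omega> t\<close>.\<close>
primrec beliefs ::
  "('h::finite \<Rightarrow> ('v \<Rightarrow> 'sig) pmf) \<Rightarrow> ('v \<times> 'v) set \<Rightarrow> ('v \<Rightarrow> 'h \<Rightarrow> real) \<Rightarrow> ('v \<Rightarrow> 'h \<Rightarrow> real)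
    \<Rightarrow> (nat \<Rightarrow> 'v \<Rightarrow> 'sig) \<Rightarrow> nat \<Rightarrow> ('v \<Rightarrow> 'h \<Rightarrow> real) \<times> ('v \<Rightarrow> 'h \<Rightarrow> real)" where
  "beliefs L E \<pi>0 \<mu>0 \<omega> 0 = (\<pi>0, \<mu>0)"
| "beliefs L E \<pi>0 \<mu>0 \<omega> (Suc t) =
     (let \<pi> = fst (beliefs L E \<pi>0 \<mu>0 \<omega> t); \<mu> = snd (beliefs L E \<pi>0 \<mu>0 \<omega> t);
          \<pi>' = (\<lambda>i \<theta>. marg_lik L i \<theta> (\<omega> t i) * \<pi> i \<theta> /
                        (\<Sum>p\<in>UNIV. marg_lik L i p (\<omega> t i) * \<pi> i p));
          m = (\<lambda>i \<theta>. Min (insert (\<pi>' i \<theta>) ((\<lambda>j. \<mu> j \<theta>) ` in_nbrs E i)))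
      in (\<pi>', \<lambda>i \<theta>. m i \<theta> / (\<Sum>p\<in>UNIV. m i p)))"

definition pi_belief where "pi_belief L E \<pi>0 \<mu>0 \<omega> t = fst (beliefs L E \<pi>0 \<mu>0 \<omega> t)"
definition mu_belief where "mu_belief L E \<pi>0 \<mu>0 \<omega> t = snd (beliefs L E \<pi>0 \<mu>0 \<omega> t)"

end

theory Submission
  imports Defs
begin

text \<open>
  The local Bayesian belief of agent v in a wrong hypothesis \<theta> satisfies
  -ln \<pi>(t, v, \<theta>) \<ge> (sum over s < t of the log-likelihood ratios of \<theta>s against \<theta>) - c,
  and by the strong law of large numbers this sum is t K(v, \<theta>s, \<theta>) - o(t) almost surely.
  The min-protocol passes the decay on: before normalisation, \<mu>(t+1, i, \<theta>) is at most
  \<pi>(t+1, i, \<theta>) and at most \<mu>(t, j, \<theta>) for every in-neighbour j. The normalising constant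
  is at least the unnormalised belief in \<theta>s, whose logarithm is only -o(t) because all
  divergences are nonnegative. Hence along a path from v to i in the strongly connected graph,
  -ln \<mu>(t, i, \<theta>) \<ge> t K(v, \<theta>s, \<theta>) - o(t). This is the rate, and since identifiability gives
  every \<theta> \<noteq> \<theta>s some K(v, \<theta>s, \<theta>) > 0, it also gives \<mu>(t, i, \<theta>s) \<rightarrow> 1.
\<close>

section \<open>Strong law of large numbers for bounded functions\<close>

lemma indep_vars_PiM_coordinates:
  assumes M: "prob_space M"
  shows "prob_space.indep_vars (\<Pi>\<^sub>M i\<in>UNIV. M) (\<lambda>_. M) (\<lambda>i \<omega>. \<omega> i) UNIV"
proof -
  let ?M = "\<Pi>\<^sub>M i\<in>UNIV. M"
  interpret prob_space ?M by (intro prob_space_PiM M)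
  show ?thesis
  proof (subst indep_vars_iff_distr_eq_PiM)
    have "distr ?M ?M (\<lambda>x. restrict x UNIV) = distr ?M ?M (\<lambda>x. x)"
      by (intro distr_cong) auto
    also have "\<dots> = (\<Pi>\<^sub>M i\<in>UNIV. distr ?M M (\<lambda>\<omega>. \<omega> i))"
      by (simp add: distr_PiM_component[OF M] cong: PiM_cong)
    finally show "distr ?M ?M (\<lambda>x. restrict x UNIV) = (\<Pi>\<^sub>M i\<in>UNIV. distr ?M M (\<lambda>\<omega>. \<omega> i))" .
  qed auto
qed

lemma strong_law_bounded_eventually:
  fixes g :: "'a \<Rightarrow> real"
  assumes M: "prob_space M" and g: "g \<in> borel_measurable M"
    and bounded: "\<And>x. \<bar>g x\<bar> \<le> B" and "\<epsilon> > 0"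
  shows "AE \<omega> in \<Pi>\<^sub>M i\<in>UNIV. M.
           eventually (\<lambda>n. \<bar>(\<Sum>i<n. g (\<omega> i)) / real n - integral\<^sup>L M g\<bar> < \<epsilon>) sequentially"
proof -
  let ?M = "\<Pi>\<^sub>M (i::nat)\<in>UNIV. M"
  interpret prob_space ?M by (intro prob_space_PiM M)
  define X where "X i \<omega> = g (\<omega> i)" for i and \<omega> :: "nat \<Rightarrow> 'a"
  \<comment> \<open>A separate name for \<open>X 0\<close> keeps the locale rule \<open>distr_X\<close> below from looping in simp.\<close>
  define Y where "Y = X 0"
  define a b where "a = - \<bar>B\<bar> - 1" and "b = \<bar>B\<bar> + 1"
  have "a < b" by (simp add: a_def b_def)
  have X_measurable [measurable]: "X i \<in> borel_measurable ?M" for i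
    unfolding X_def by (rule measurable_compose[OF measurable_component_singleton[of i UNIV] g]) simp
  have distr_X: "distr ?M borel (X i) = distr M borel g" for i
  proof -
    have "distr ?M borel (X i) = distr (distr ?M M (\<lambda>\<omega>. \<omega> i)) borel g"
      unfolding X_def by (subst distr_distr) (auto simp: comp_def g)
    then show ?thesis using distr_PiM_component[of UNIV "\<lambda>_. M" i] M by simp
  qed
  have mean: "expectation Y = integral\<^sup>L M g"
  proof -
    have "expectation Y = integral\<^sup>L (distr ?M borel (X 0)) (\<lambda>x. x)"
      by (simp add: integral_distr Y_def)
    also have "\<dots> = integral\<^sup>L M g"
      by (simp add: distr_X integral_distr g)
    finally show ?thesis .
  qed
  define A where "A n = {\<omega> \<in> space ?M. \<bar>(\<Sum>i<n. X i \<omega>) / real n - expectation Y\<bar> \<ge> \<epsilon>}" for n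
  have A_sets [measurable]: "A n \<in> sets ?M" for n
    unfolding A_def by measurable
  \<comment> \<open>Hoeffding makes the deviation probabilities geometrically small; then Borel--Cantelli.\<close>
  define q where "q = exp (-2 * \<epsilon>\<^sup>2 / (b - a)\<^sup>2)"
  have A_prob: "prob (A n) \<le> 2 * q ^ n" for n
  proof (cases "n = 0")
    case False
    interpret Hoeffding_ineq_iid ?M "{..<n}" X Y a b "expectation Y"
    proof unfold_locales
      have "indep_vars (\<lambda>_. borel) X UNIV"
        unfolding X_def by (rule indep_vars_compose2[OF indep_vars_PiM_coordinates[OF M]]) (simp add: g)
      then show "indep_vars (\<lambda>_. borel) X {..<n}"
        by (rule indep_vars_subset) simp
      show "AE x in ?M. Y x \<in> {a..b}"
      proof (intro AE_I2)
        fix x :: "nat \<Rightarrow> 'a"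
        show "Y x \<in> {a..b}"
          using bounded[of "x 0"] unfolding atLeastAtMost_iff Y_def X_def a_def b_def by arith
      qed
      show "distr ?M borel (X i) = distr ?M borel Y" for i
        unfolding Y_def by (simp only: distr_X)
    qed (simp_all add: Y_def)
    have "prob (A n) \<le> 2 * exp (-2 * real n * \<epsilon>\<^sup>2 / (b - a)\<^sup>2)"
      using Hoeffding_ineq_abs_ge'[of \<epsilon>] \<open>\<epsilon> > 0\<close> \<open>a < b\<close> False unfolding A_def by auto
    also have "exp (-2 * real n * \<epsilon>\<^sup>2 / (b - a)\<^sup>2) = q ^ n"
      unfolding q_def by (subst exp_of_nat_mult[symmetric]) (simp add: field_simps)
    finally show ?thesis .
  qed (simp add: order_trans[OF prob_le_1])
  have "summable (\<lambda>n. 2 * q ^ n)"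
    using \<open>\<epsilon> > 0\<close> \<open>a < b\<close> by (intro summable_mult summable_geometric) (simp add: q_def)
  then have "summable (\<lambda>n. measure ?M (A n))"
    by (rule summable_comparison_test') (use A_prob in simp)
  from borel_cantelli_AE1[OF A_sets _ this]
  have "AE \<omega> in ?M. eventually (\<lambda>n. \<omega> \<in> space ?M - A n) sequentially"
    by (simp add: emeasure_eq_measure)
  then show ?thesis
    by (rule AE_mp) (auto intro!: AE_I2 elim!: eventually_mono simp: A_def X_def mean)
qed

lemma strong_law_bounded:
  fixes g :: "'a \<Rightarrow> real"
  assumes M: "prob_space M" and g: "g \<in> borel_measurable M" and bounded: "\<And>x. \<bar>g x\<bar> \<le> B"
  shows "AE \<omega> in \<Pi>\<^sub>M i\<in>UNIV. M. (\<lambda>n. (\<Sum>i<n. g (\<omega> i)) / real n) \<longlonglongrightarrow> integral\<^sup>L M g"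
proof -
  have "AE \<omega> in \<Pi>\<^sub>M i\<in>UNIV. M. \<forall>k::nat. eventually
          (\<lambda>n. \<bar>(\<Sum>i<n. g (\<omega> i)) / real n - integral\<^sup>L M g\<bar> < 1 / Suc k) sequentially"
    by (subst AE_all_countable) (intro allI strong_law_bounded_eventually[OF M g bounded]; simp)
  then show ?thesis
  proof (rule AE_mp, intro AE_I2 impI)
    fix \<omega> :: "nat \<Rightarrow> 'a"
    assume close: "\<forall>k::nat. eventually
      (\<lambda>n. \<bar>(\<Sum>i<n. g (\<omega> i)) / real n - integral\<^sup>L M g\<bar> < 1 / Suc k) sequentially"
    show "(\<lambda>n. (\<Sum>i<n. g (\<omega> i)) / real n) \<longlonglongrightarrow> integral\<^sup>L M g"
    proof (rule tendstoI)
      fix e :: real assume "e > 0"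
      then obtain k :: nat where "1 / Suc k < e"
        using nat_approx_posE by blast
      with close[rule_format, of k]
      show "eventually (\<lambda>n. dist ((\<Sum>i<n. g (\<omega> i)) / real n) (integral\<^sup>L M g) < e) sequentially"
        by (auto elim!: eventually_mono simp: dist_real_def)
    qed
  qed
qed

section \<open>Sublinear upper bounds\<close>

text \<open>\<open>sublinear_above x\<close> says \<open>limsup x t / t \<le> 0\<close>, phrased without limits.\<close>

definition sublinear_above :: "(nat \<Rightarrow> real) \<Rightarrow> bool" where
  "sublinear_above x \<longleftrightarrow> (\<forall>\<epsilon>>0. \<exists>C. \<forall>t. x t \<le> C + \<epsilon> * real t)"

lemma sublinear_aboveD:
  "sublinear_above x \<Longrightarrow> \<epsilon> > 0 \<Longrightarrow> \<exists>C. \<forall>t. x t \<le> C + \<epsilon> * real t"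
  by (auto simp: sublinear_above_def)

lemma sublinear_above_eventually:
  assumes "\<And>\<epsilon>. \<epsilon> > 0 \<Longrightarrow> \<exists>C. eventually (\<lambda>t. x t \<le> C + \<epsilon> * real t) sequentially"
  shows "sublinear_above x"
  unfolding sublinear_above_def
proof (intro allI impI)
  fix \<epsilon> :: real assume "\<epsilon> > 0"
  then obtain C N where C: "\<And>t. t \<ge> N \<Longrightarrow> x t \<le> C + \<epsilon> * real t"
    using assms unfolding eventually_sequentially by meson
  have "x t \<le> max C (Max (x ` {..<N})) + \<epsilon> * real t" for t
  proof (cases "t \<ge> N")
    case False
    then have "x t \<le> Max (x ` {..<N})" by (intro Max_ge) auto
    with \<open>\<epsilon> > 0\<close> show ?thesis by (smt (verit) of_nat_0_le_iff mult_nonneg_nonneg)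
  qed (use C in fastforce)
  then show "\<exists>C. \<forall>t. x t \<le> C + \<epsilon> * real t" by blast
qed

lemma sublinear_above_mono: "sublinear_above y \<Longrightarrow> (\<And>t. x t \<le> y t) \<Longrightarrow> sublinear_above x"
  unfolding sublinear_above_def by (meson order_trans)

lemma sublinear_above_const: "sublinear_above (\<lambda>t. c)"
  unfolding sublinear_above_def by (auto intro!: exI[of _ c])

lemma sublinear_above_add:
  assumes x: "sublinear_above x" and y: "sublinear_above y"
  shows "sublinear_above (\<lambda>t. x t + y t)"
  unfolding sublinear_above_def
proof (intro allI impI)
  fix \<epsilon> :: real assume "\<epsilon> > 0"
  then obtain C D where "\<forall>t. x t \<le> C + \<epsilon>/2 * real t" "\<forall>t. y t \<le> D + \<epsilon>/2 * real t"
    using sublinear_aboveD[OF x, of "\<epsilon>/2"] sublinear_aboveD[OF y, of "\<epsilon>/2"] by auto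
  then have "x t + y t \<le> (C + D) + \<epsilon> * real t" for t
    by (smt (verit) field_sum_of_halves distrib_right)
  then show "\<exists>C. \<forall>t. x t + y t \<le> C + \<epsilon> * real t" by blast
qed

lemma sublinear_above_max:
  assumes x: "sublinear_above x" and y: "sublinear_above y"
  shows "sublinear_above (\<lambda>t. max (x t) (y t))"
  unfolding sublinear_above_def
proof (intro allI impI)
  fix \<epsilon> :: real assume "\<epsilon> > 0"
  then obtain C D where "\<forall>t. x t \<le> C + \<epsilon> * real t" "\<forall>t. y t \<le> D + \<epsilon> * real t"
    using sublinear_aboveD[OF x] sublinear_aboveD[OF y] by meson
  then have "max (x t) (y t) \<le> max C D + \<epsilon> * real t" for t
    by (smt (verit))
  then show "\<exists>C. \<forall>t. max (x t) (y t) \<le> C + \<epsilon> * real t" by blast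
qed

lemma sublinear_above_Max:
  assumes "finite I" "I \<noteq> {}" "\<And>i. i \<in> I \<Longrightarrow> sublinear_above (x i)"
  shows "sublinear_above (\<lambda>t. Max ((\<lambda>i. x i t) ` I))"
  using assms
proof (induction I rule: finite_ne_induct)
  case (insert i I)
  then show ?case
    by (simp add: sublinear_above_max)
qed simp

lemma sublinear_above_Suc_iff: "sublinear_above (\<lambda>t. x (Suc t)) \<longleftrightarrow> sublinear_above x"
proof
  assume shifted: "sublinear_above (\<lambda>t. x (Suc t))"
  show "sublinear_above x"
    unfolding sublinear_above_def
  proof (intro allI impI)
    fix \<epsilon> :: real assume "\<epsilon> > 0"
    then obtain C where C: "\<forall>t. x (Suc t) \<le> C + \<epsilon> * real t"
      using sublinear_aboveD[OF shifted] by blast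
    have "x t \<le> max C (x 0) + \<epsilon> * real t" for t
      using C \<open>\<epsilon> > 0\<close> by (cases t) (auto simp: distrib_left intro: order_trans)
    then show "\<exists>C. \<forall>t. x t \<le> C + \<epsilon> * real t" by blast
  qed
next
  assume "sublinear_above x"
  then show "sublinear_above (\<lambda>t. x (Suc t))"
    unfolding sublinear_above_def
    by (metis add.assoc distrib_left mult.right_neutral of_nat_Suc)
qed

lemma sublinear_above_recurrence:
  assumes step: "\<And>t. x (Suc t) \<le> max (x t) (y t)" and y: "sublinear_above y"
  shows "sublinear_above x"
  unfolding sublinear_above_def
proof (intro allI impI)
  fix \<epsilon> :: real assume "\<epsilon> > 0"
  then obtain C where C: "\<forall>t. y t \<le> C + \<epsilon> * real t"
    using sublinear_aboveD[OF y] by blast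
  have "x t \<le> max C (x 0) + \<epsilon> * real t" for t
  proof (induction t)
    case (Suc t)
    have "\<epsilon> * real t \<le> \<epsilon> * real (Suc t)" using \<open>\<epsilon> > 0\<close> by simp
    with Suc step[of t] C show ?case by (smt (verit))
  qed simp
  then show "\<exists>C. \<forall>t. x t \<le> C + \<epsilon> * real t" by blast
qed

lemma sublinear_above_of_average:
  assumes "(\<lambda>t. y t / real t) \<longlonglongrightarrow> K"
  shows "sublinear_above (\<lambda>t. K * real t - y t)"
proof (rule sublinear_above_eventually)
  fix \<epsilon> :: real assume "\<epsilon> > 0"
  have "eventually (\<lambda>t. dist (y t / real t) K < \<epsilon> \<and> t > 0) sequentially"
    using tendstoD[OF assms \<open>\<epsilon> > 0\<close>] eventually_gt_at_top[of 0] by (rule eventually_conj)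
  then have "eventually (\<lambda>t. K * real t - y t \<le> 0 + \<epsilon> * real t) sequentially"
  proof (rule eventually_mono)
    fix t assume close: "dist (y t / real t) K < \<epsilon> \<and> t > 0"
    then have "(K - y t / real t) * real t \<le> \<epsilon> * real t"
      by (intro mult_right_mono) (auto simp: dist_real_def)
    then show "K * real t - y t \<le> 0 + \<epsilon> * real t"
      using close by (simp add: algebra_simps)
  qed
  then show "\<exists>C. eventually (\<lambda>t. K * real t - y t \<le> C + \<epsilon> * real t) sequentially" by blast
qed

lemma sublinear_above_gap_eventually:
  assumes gap: "sublinear_above (\<lambda>t. K * real t - d t)" and "\<epsilon> > 0"
  shows "eventually (\<lambda>t. d t > (K - \<epsilon>) * real t) sequentially"
proof -
  obtain C where C: "\<forall>t. K * real t - d t \<le> C + \<epsilon> / 2 * real t"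
    using sublinear_aboveD[OF gap, of "\<epsilon> / 2"] \<open>\<epsilon> > 0\<close> by auto
  obtain N :: nat where N: "2 * \<bar>C\<bar> / \<epsilon> < N"
    using reals_Archimedean2 by blast
  have "d t > (K - \<epsilon>) * real t" if "t \<ge> N" for t
  proof -
    have "2 * \<bar>C\<bar> / \<epsilon> < real t" using N that by linarith
    then have "\<bar>C\<bar> < \<epsilon> / 2 * real t" using \<open>\<epsilon> > 0\<close> by (simp add: field_simps)
    with C[rule_format, of t] show ?thesis by (simp add: algebra_simps)
  qed
  then show ?thesis by (auto simp: eventually_sequentially)
qed

lemma sublinear_above_Liminf:
  assumes gap: "sublinear_above (\<lambda>t. K * real t - d t)"
  shows "ereal K \<le> Liminf sequentially (\<lambda>t. ereal (d t / real t))"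
proof (rule dense_le)
  fix y assume "y < ereal K"
  then consider (minf) "y = -\<infinity>" | (real) r where "y = ereal r" "r < K"
    by (cases y) auto
  then show "y \<le> Liminf sequentially (\<lambda>t. ereal (d t / real t))"
  proof cases
    case real
    have "eventually (\<lambda>t. d t > (K - (K - r)) * real t \<and> t > 0) sequentially"
      using sublinear_above_gap_eventually[OF gap, of "K - r"] real eventually_gt_at_top[of 0]
      by (auto intro: eventually_conj)
    then have "eventually (\<lambda>t. y \<le> ereal (d t / real t)) sequentially"
      by (rule eventually_mono) (auto simp: real field_simps)
    then show ?thesis by (rule Liminf_bounded)
  qed simp
qed

lemma sublinear_above_exp_tendsto_0:
  assumes gap: "sublinear_above (\<lambda>t. K * real t - d t)" and "K > 0"
  shows "(\<lambda>t. exp (- d t)) \<longlonglongrightarrow> 0"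
proof (rule Lim_null_comparison)
  have "eventually (\<lambda>t. d t > K / 2 * real t) sequentially"
    using sublinear_above_gap_eventually[OF gap, of "K / 2"] \<open>K > 0\<close> by simp
  then show "eventually (\<lambda>t. norm (exp (- d t)) \<le> exp (- K / 2) ^ t) sequentially"
    by (rule eventually_mono) (simp add: exp_of_nat_mult[symmetric] mult.commute)
  show "(\<lambda>t. exp (- K / 2) ^ t) \<longlonglongrightarrow> 0"
    using \<open>K > 0\<close> by (intro LIMSEQ_power_zero) auto
qed

lemma ln_sum_exp_le:
  assumes "finite A" "A \<noteq> {}"
  shows "ln (\<Sum>a\<in>A. exp (x a)) \<le> ln (real (card A)) + Max (x ` A)"
proof -
  have "(\<Sum>a\<in>A. exp (x a)) \<le> (\<Sum>a\<in>A. exp (Max (x ` A)))"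
    using assms by (intro sum_mono) simp
  also have "\<dots> = real (card A) * exp (Max (x ` A))"
    by simp
  finally have "ln (\<Sum>a\<in>A. exp (x a)) \<le> ln (real (card A) * exp (Max (x ` A)))"
    using assms by (intro ln_mono sum_pos) auto
  also have "\<dots> = ln (real (card A)) + Max (x ` A)"
    using assms by (simp add: ln_mult card_gt_0_iff)
  finally show ?thesis .
qed

section \<open>Belief dynamics along a fixed signal sequence\<close>

locale belief_path =
  fixes L :: "'h::finite \<Rightarrow> ('v::finite \<Rightarrow> 'sig) pmf"
    and E :: "('v \<times> 'v) set"
    and \<pi>0 \<mu>0 :: "'v \<Rightarrow> 'h \<Rightarrow> real"
    and \<omega> :: "nat \<Rightarrow> 'v \<Rightarrow> 'sig"
  assumes lik_pos: "\<And>t i \<theta>. marg_lik L i \<theta> (\<omega> t i) > 0"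
    and pi0_prob: "\<And>i. (\<Sum>\<theta>\<in>UNIV. \<pi>0 i \<theta>) = 1"
    and mu0_prob: "\<And>i. (\<Sum>\<theta>\<in>UNIV. \<mu>0 i \<theta>) = 1"
    and pos0: "\<And>i \<theta>. \<pi>0 i \<theta> > 0 \<and> \<mu>0 i \<theta> > 0"
begin

abbreviation \<pi> where "\<pi> \<equiv> pi_belief L E \<pi>0 \<mu>0 \<omega>"
abbreviation \<mu> where "\<mu> \<equiv> mu_belief L E \<pi>0 \<mu>0 \<omega>"

definition lik :: "'v \<Rightarrow> 'h \<Rightarrow> nat \<Rightarrow> real" where
  "lik i \<theta> t = marg_lik L i \<theta> (\<omega> t i)"

definition min_belief :: "nat \<Rightarrow> 'v \<Rightarrow> 'h \<Rightarrow> real" where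
  "min_belief t i \<theta> = Min (insert (\<pi> (Suc t) i \<theta>) ((\<lambda>j. \<mu> t j \<theta>) ` in_nbrs E i))"

lemma pi_belief_0: "\<pi> 0 = \<pi>0" and mu_belief_0: "\<mu> 0 = \<mu>0"
  by (simp_all add: pi_belief_def mu_belief_def)

lemma pi_belief_Suc: "\<pi> (Suc t) i \<theta> = lik i \<theta> t * \<pi> t i \<theta> / (\<Sum>p\<in>UNIV. lik i p t * \<pi> t i p)"
  by (simp add: pi_belief_def lik_def Let_def)

lemma mu_belief_Suc: "\<mu> (Suc t) i \<theta> = min_belief t i \<theta> / (\<Sum>p\<in>UNIV. min_belief t i p)"
  by (simp add: pi_belief_def mu_belief_def min_belief_def Let_def)

lemma lik_gt_0: "lik i \<theta> t > 0"
  by (simp add: lik_def lik_pos)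

lemma min_belief_le_pi_belief: "min_belief t i \<theta> \<le> \<pi> (Suc t) i \<theta>"
  unfolding min_belief_def by (rule Min_le) auto

lemma min_belief_le_mu_belief: "(j, i) \<in> E \<Longrightarrow> min_belief t i \<theta> \<le> \<mu> t j \<theta>"
  unfolding min_belief_def by (rule Min_le) (auto simp: in_nbrs_def)

lemma min_belief_ge:
  "c \<le> \<pi> (Suc t) i \<theta> \<Longrightarrow> (\<And>j. c \<le> \<mu> t j \<theta>) \<Longrightarrow> c \<le> min_belief t i \<theta>"
  unfolding min_belief_def by simp

lemma beliefs_positive_normalized:
  "(\<forall>i \<theta>. \<pi> t i \<theta> > 0 \<and> \<mu> t i \<theta> > 0) \<and> (\<forall>i. sum (\<pi> t i) UNIV = 1 \<and> sum (\<mu> t i) UNIV = 1)"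
proof (induction t)
  case 0
  then show ?case using pos0 pi0_prob mu0_prob by (simp add: pi_belief_0 mu_belief_0)
next
  case (Suc t)
  have lik_sum_pos: "(\<Sum>p\<in>UNIV. lik i p t * \<pi> t i p) > 0" for i
    using Suc lik_gt_0 by (intro sum_pos) auto
  have pi_pos: "\<pi> (Suc t) i \<theta> > 0" for i \<theta>
    using Suc lik_gt_0 lik_sum_pos[of i] by (simp add: pi_belief_Suc)
  have pi_sum: "sum (\<pi> (Suc t) i) UNIV = 1" for i
    using lik_sum_pos[of i] by (simp add: pi_belief_Suc sum_divide_distrib[symmetric])
  have min_pos: "min_belief t i \<theta> > 0" for i \<theta>
    using Suc pi_pos by (simp add: min_belief_def)
  have min_sum_pos: "(\<Sum>p\<in>UNIV. min_belief t i p) > 0" for i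
    using min_pos by (intro sum_pos) auto
  show ?case
    using pi_pos pi_sum min_pos min_sum_pos
    by (simp add: mu_belief_Suc sum_divide_distrib[symmetric] less_imp_neq[symmetric])
qed

lemma pi_belief_pos: "\<pi> t i \<theta> > 0" and mu_belief_pos: "\<mu> t i \<theta> > 0"
  and pi_belief_sum: "sum (\<pi> t i) UNIV = 1" and mu_belief_sum: "sum (\<mu> t i) UNIV = 1"
  using beliefs_positive_normalized[of t] by auto

lemma neg_ln_pi_belief_nonneg: "- ln (\<pi> t i \<theta>) \<ge> 0"
  using member_le_sum[of \<theta> UNIV "\<pi> t i"] pi_belief_pos pi_belief_sum
  by (simp add: less_imp_le)

lemma min_belief_pos: "min_belief t i \<theta> > 0"
  using pi_belief_pos mu_belief_pos by (simp add: min_belief_def)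

lemma min_belief_sum_pos: "(\<Sum>p\<in>UNIV. min_belief t i p) > 0"
  using min_belief_pos by (intro sum_pos) auto

lemma neg_ln_mu_belief_Suc:
  "- ln (\<mu> (Suc t) i \<theta>) = - ln (min_belief t i \<theta>) + ln (\<Sum>p\<in>UNIV. min_belief t i p)"
  using min_belief_pos[of t i \<theta>] min_belief_sum_pos[of t i]
  by (simp add: mu_belief_Suc ln_div)

lemma ln_min_belief_sum_bounds:
  "ln (min_belief t i \<theta>) \<le> ln (\<Sum>p\<in>UNIV. min_belief t i p)"
  "ln (\<Sum>p\<in>UNIV. min_belief t i p) \<le> 0"
proof -
  have "min_belief t i \<theta> \<le> (\<Sum>p\<in>UNIV. min_belief t i p)"
    using min_belief_pos by (intro member_le_sum) (auto intro: less_imp_le)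
  then show "ln (min_belief t i \<theta>) \<le> ln (\<Sum>p\<in>UNIV. min_belief t i p)"
    using min_belief_pos[of t i \<theta>] by simp
  have "(\<Sum>p\<in>UNIV. min_belief t i p) \<le> sum (\<pi> (Suc t) i) UNIV"
    by (intro sum_mono min_belief_le_pi_belief)
  then show "ln (\<Sum>p\<in>UNIV. min_belief t i p) \<le> 0"
    using min_belief_sum_pos[of t i] by (simp add: pi_belief_sum)
qed

lemma neg_ln_min_belief_ge:
  "- ln (\<pi> (Suc t) i \<theta>) \<le> - ln (min_belief t i \<theta>)"
  "(j, i) \<in> E \<Longrightarrow> - ln (\<mu> t j \<theta>) \<le> - ln (min_belief t i \<theta>)"
  using min_belief_le_pi_belief[of t i \<theta>] min_belief_le_mu_belief[of j i t \<theta>] min_belief_pos[of t i \<theta>]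
  by simp_all

lemma ln_pi_belief_ratio:
  "ln (\<pi> t v \<theta>) - ln (\<pi> t v \<theta>') =
     ln (\<pi>0 v \<theta>) - ln (\<pi>0 v \<theta>') - (\<Sum>s<t. ln (lik v \<theta>' s) - ln (lik v \<theta> s))"
proof (induction t)
  case (Suc t)
  define Z where "Z = (\<Sum>p\<in>UNIV. lik v p t * \<pi> t v p)"
  have "Z > 0" unfolding Z_def using lik_gt_0 pi_belief_pos by (intro sum_pos) auto
  then have "ln (\<pi> (Suc t) v \<theta>) = ln (lik v \<theta> t) + ln (\<pi> t v \<theta>) - ln Z" for \<theta>
    using lik_gt_0[of v \<theta> t] pi_belief_pos[of t v \<theta>]
    by (simp add: pi_belief_Suc Z_def[symmetric] ln_div ln_mult)
  with Suc show ?case by simp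
qed (simp add: pi_belief_0)

end

section \<open>Learning along a typical sample path\<close>

locale learning_path = belief_path L E \<pi>0 \<mu>0 \<omega>
  for L :: "'h::finite \<Rightarrow> ('v::finite \<Rightarrow> 'sig) pmf" and E \<pi>0 \<mu>0 \<omega> +
  fixes \<theta>s :: 'h and K :: "'v \<Rightarrow> 'h \<Rightarrow> real"
  assumes log_lik_average:
      "\<And>v \<theta>. (\<lambda>t. (\<Sum>s<t. ln (marg_lik L v \<theta>s (\<omega> s v)) - ln (marg_lik L v \<theta> (\<omega> s v))) / real t)
              \<longlonglongrightarrow> K v \<theta>"
    and K_nonneg: "\<And>v \<theta>. K v \<theta> \<ge> 0"
    and strongly_connected: "\<And>i j. (i, j) \<in> E\<^sup>*"
begin

definition log_lik_ratio :: "'v \<Rightarrow> 'h \<Rightarrow> nat \<Rightarrow> real" where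
  "log_lik_ratio v \<theta> t = (\<Sum>s<t. ln (lik v \<theta>s s) - ln (lik v \<theta> s))"

text \<open>The normalisation of \<open>\<mu>\<close> at time \<open>t + 1\<close> costs at most \<open>deficit t\<close> on the logarithmic
  scale.\<close>

definition pi_deficit :: "nat \<Rightarrow> real" where
  "pi_deficit t = Max (range (\<lambda>i. - ln (\<pi> t i \<theta>s)))"

definition mu_deficit :: "nat \<Rightarrow> real" where
  "mu_deficit t = Max (range (\<lambda>i. - ln (\<mu> t i \<theta>s)))"

definition deficit :: "nat \<Rightarrow> real" where
  "deficit t = max (mu_deficit t) (pi_deficit (Suc t))"

lemma log_lik_ratio_sublinear: "sublinear_above (\<lambda>t. K v \<theta> * real t - log_lik_ratio v \<theta> t)"
  unfolding log_lik_ratio_def lik_def by (rule sublinear_above_of_average[OF log_lik_average])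

lemma neg_ln_pi_belief_ge:
  "log_lik_ratio v \<theta> t - (ln (\<pi>0 v \<theta>) - ln (\<pi>0 v \<theta>s)) \<le> - ln (\<pi> t v \<theta>)"
  using ln_pi_belief_ratio[of t v \<theta> \<theta>s] neg_ln_pi_belief_nonneg[of t v \<theta>s]
  unfolding log_lik_ratio_def by linarith

lemma neg_ln_pi_belief_true_sublinear: "sublinear_above (\<lambda>t. - ln (\<pi> t v \<theta>s))"
proof -
  define D where "D \<theta> t = ln (\<pi>0 v \<theta>) - ln (\<pi>0 v \<theta>s) + - log_lik_ratio v \<theta> t" for \<theta> t
  have "- ln (\<pi> t v \<theta>s) = ln (\<Sum>\<theta>\<in>UNIV. exp (D \<theta> t))" for t
  proof -
    have "exp (D \<theta> t) = \<pi> t v \<theta> / \<pi> t v \<theta>s" for \<theta>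
    proof -
      have "D \<theta> t = ln (\<pi> t v \<theta>) - ln (\<pi> t v \<theta>s)"
        using ln_pi_belief_ratio[of t v \<theta> \<theta>s] by (simp add: D_def log_lik_ratio_def)
      then show ?thesis
        using pi_belief_pos[of t v] by (simp add: exp_diff)
    qed
    then have "(\<Sum>\<theta>\<in>UNIV. exp (D \<theta> t)) = 1 / \<pi> t v \<theta>s"
      by (simp add: sum_divide_distrib[symmetric] pi_belief_sum)
    then show ?thesis
      using pi_belief_pos[of t v \<theta>s] by (simp add: ln_div)
  qed
  also have "\<dots> t \<le> ln (real CARD('h)) + Max (range (\<lambda>\<theta>. D \<theta> t))" for t
    by (rule ln_sum_exp_le) simp_all
  finally have bound: "- ln (\<pi> t v \<theta>s) \<le> ln (real CARD('h)) + Max (range (\<lambda>\<theta>. D \<theta> t))" for t .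
  have "sublinear_above (D \<theta>)" for \<theta>
  proof -
    have "- log_lik_ratio v \<theta> t \<le> K v \<theta> * real t - log_lik_ratio v \<theta> t" for t
      using K_nonneg[of v \<theta>] by simp
    then have "sublinear_above (\<lambda>t. - log_lik_ratio v \<theta> t)"
      by (rule sublinear_above_mono[OF log_lik_ratio_sublinear])
    then show ?thesis
      unfolding D_def by (intro sublinear_above_add sublinear_above_const)
  qed
  then have "sublinear_above (\<lambda>t. ln (real CARD('h)) + Max (range (\<lambda>\<theta>. D \<theta> t)))"
    by (intro sublinear_above_add sublinear_above_const sublinear_above_Max) simp_all
  then show ?thesis
    using bound by (rule sublinear_above_mono)
qed

lemma neg_ln_min_belief_true_le: "- ln (min_belief t i \<theta>s) \<le> deficit t"
proof -
  have "exp (- deficit t) \<le> min_belief t i \<theta>s"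
  proof (rule min_belief_ge)
    have "- ln (\<pi> (Suc t) i \<theta>s) \<le> deficit t"
      unfolding deficit_def pi_deficit_def by (intro max.coboundedI2 Max_ge) auto
    then show "exp (- deficit t) \<le> \<pi> (Suc t) i \<theta>s"
      using pi_belief_pos by (metis exp_le_cancel_iff exp_ln minus_le_iff)
    fix j
    have "- ln (\<mu> t j \<theta>s) \<le> deficit t"
      unfolding deficit_def mu_deficit_def by (intro max.coboundedI1 Max_ge) auto
    then show "exp (- deficit t) \<le> \<mu> t j \<theta>s"
      using mu_belief_pos by (metis exp_le_cancel_iff exp_ln minus_le_iff)
  qed
  then show ?thesis
    using min_belief_pos[of t i \<theta>s] by (metis ln_exp ln_mono minus_le_iff exp_gt_zero)
qed

lemma deficit_sublinear: "sublinear_above deficit"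
proof -
  have pi_deficit: "sublinear_above pi_deficit"
    unfolding pi_deficit_def
    by (intro sublinear_above_Max neg_ln_pi_belief_true_sublinear) simp_all
  have "mu_deficit (Suc t) \<le> deficit t" for t
    using neg_ln_mu_belief_Suc[of t _ \<theta>s] ln_min_belief_sum_bounds(2)[of t]
      neg_ln_min_belief_true_le[of t]
    unfolding mu_deficit_def[of "Suc t"] by (simp add: Max_le_iff) (smt (verit))
  then have "sublinear_above mu_deficit"
    unfolding deficit_def
    by (rule sublinear_above_recurrence) (simp add: pi_deficit sublinear_above_Suc_iff)
  then show ?thesis
    unfolding deficit_def
    by (intro sublinear_above_max) (simp_all add: pi_deficit sublinear_above_Suc_iff)
qed

lemma neg_ln_mu_belief_Suc_ge: "- ln (min_belief t i \<theta>) - deficit t \<le> - ln (\<mu> (Suc t) i \<theta>)"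
  using neg_ln_mu_belief_Suc[of t i \<theta>] ln_min_belief_sum_bounds(1)[of t i \<theta>s]
    neg_ln_min_belief_true_le[of t i]
  by linarith

text \<open>Along each edge \<open>(j, i)\<close> the rate of \<open>j\<close> is inherited by \<open>i\<close>, up to a constant and the
  sublinear deficit.\<close>

lemma neg_ln_mu_belief_rate:
  assumes "(v, i) \<in> E\<^sup>*"
  shows "sublinear_above (\<lambda>t. K v \<theta> * real t + ln (\<mu> t i \<theta>))"
  using assms
proof (induction rule: rtrancl_induct)
  case base
  let ?c = "ln (\<pi>0 v \<theta>) - ln (\<pi>0 v \<theta>s)"
  have "K v \<theta> * real (Suc t) + ln (\<mu> (Suc t) v \<theta>)
          \<le> (K v \<theta> * real (Suc t) - log_lik_ratio v \<theta> (Suc t)) + (?c + deficit t)" for t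
    using neg_ln_mu_belief_Suc_ge[of t v \<theta>] neg_ln_min_belief_ge(1)[of t v \<theta>]
      neg_ln_pi_belief_ge[of v \<theta> "Suc t"]
    by linarith
  moreover have "sublinear_above
      (\<lambda>t. (K v \<theta> * real (Suc t) - log_lik_ratio v \<theta> (Suc t)) + (?c + deficit t))"
    using sublinear_above_Suc_iff[of "\<lambda>t. K v \<theta> * real t - log_lik_ratio v \<theta> t"]
    by (intro sublinear_above_add sublinear_above_const deficit_sublinear)
       (simp add: log_lik_ratio_sublinear)
  ultimately show ?case
    by (subst sublinear_above_Suc_iff[symmetric]) (rule sublinear_above_mono)
next
  case (step j i)
  have "K v \<theta> * real (Suc t) + ln (\<mu> (Suc t) i \<theta>)
          \<le> K v \<theta> + (K v \<theta> * real t + ln (\<mu> t j \<theta>)) + deficit t" for t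
    using neg_ln_mu_belief_Suc_ge[of t i \<theta>] neg_ln_min_belief_ge(2)[OF step.hyps(2), of t \<theta>]
    by (simp add: algebra_simps)
  moreover have "sublinear_above (\<lambda>t. K v \<theta> + (K v \<theta> * real t + ln (\<mu> t j \<theta>)) + deficit t)"
    by (intro sublinear_above_add sublinear_above_const step.IH deficit_sublinear)
  ultimately show ?case
    by (subst sublinear_above_Suc_iff[symmetric]) (rule sublinear_above_mono)
qed

lemma liminf_neg_ln_mu_belief:
  "ereal (K v \<theta>) \<le> Liminf sequentially (\<lambda>t. ereal (- ln (\<mu> t i \<theta>) / real t))"
  using neg_ln_mu_belief_rate[OF strongly_connected[of v i], of \<theta>]
  by (intro sublinear_above_Liminf) simp

lemma mu_belief_tendsto_0:
  assumes "K v \<theta> > 0"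
  shows "(\<lambda>t. \<mu> t i \<theta>) \<longlonglongrightarrow> 0"
proof -
  have "(\<lambda>t. exp (- (- ln (\<mu> t i \<theta>)))) \<longlonglongrightarrow> 0"
    using neg_ln_mu_belief_rate[OF strongly_connected[of v i], of \<theta>] assms
    by (intro sublinear_above_exp_tendsto_0) simp_all
  then show ?thesis
    using mu_belief_pos by simp
qed

lemma mu_belief_true_tendsto_1:
  assumes identifiable: "\<And>\<theta>. \<theta> \<noteq> \<theta>s \<Longrightarrow> \<exists>v. K v \<theta> > 0"
  shows "(\<lambda>t. \<mu> t i \<theta>s) \<longlonglongrightarrow> 1"
proof -
  have "(\<lambda>t. 1 - (\<Sum>\<theta>\<in>UNIV - {\<theta>s}. \<mu> t i \<theta>)) \<longlonglongrightarrow> 1 - (\<Sum>\<theta>\<in>UNIV - {\<theta>s}. 0)"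
    using identifiable mu_belief_tendsto_0 by (intro tendsto_intros) blast
  moreover have "1 - (\<Sum>\<theta>\<in>UNIV - {\<theta>s}. \<mu> t i \<theta>) = \<mu> t i \<theta>s" for t
    using mu_belief_sum[of t i] sum.remove[of UNIV \<theta>s "\<mu> t i"] by simp
  ultimately show ?thesis by simp
qed

end

section \<open>Almost sure learning\<close>

lemma KLdiv_eq_expectation:
  assumes supp: "set_pmf (L p) \<subseteq> {s. s v \<in> S v}"
    and lik_pos: "\<And>\<theta> w. w \<in> S v \<Longrightarrow> marg_lik L v \<theta> w > 0"
    and "finite (S v)"
  shows "measure_pmf.expectation (L p) (\<lambda>s. ln (marg_lik L v p (s v)) - ln (marg_lik L v q (s v)))
           = KLdiv L S v p q"
proof -
  let ?h = "\<lambda>w. ln (marg_lik L v p w) - ln (marg_lik L v q w)"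
  have "measure_pmf.expectation (L p) (\<lambda>s. ?h (s v))
          = measure_pmf.expectation (map_pmf (\<lambda>s. s v) (L p)) ?h"
    by simp
  also have "\<dots> = (\<Sum>w\<in>S v. marg_lik L v p w * ?h w)"
    unfolding marg_lik_def using supp \<open>finite (S v)\<close> by (subst integral_measure_pmf) auto
  also have "\<dots> = KLdiv L S v p q"
    unfolding KLdiv_def using lik_pos by (intro sum.cong) (simp_all add: ln_div less_imp_neq[symmetric])
  finally show ?thesis .
qed

lemma KLdiv_nonneg:
  assumes supp: "set_pmf (L p) \<subseteq> {s. s v \<in> S v}"
    and lik_pos: "\<And>\<theta> w. w \<in> S v \<Longrightarrow> marg_lik L v \<theta> w > 0"
    and "finite (S v)"
  shows "KLdiv L S v p q \<ge> 0"
proof -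
  let ?p = "marg_lik L v p" and ?q = "marg_lik L v q"
  have "(\<Sum>w\<in>S v. ?p w - ?q w) \<le> KLdiv L S v p q"
    unfolding KLdiv_def
  proof (rule sum_mono)
    fix w assume w: "w \<in> S v"
    then have "ln (?q w / ?p w) \<le> ?q w / ?p w - 1"
      using lik_pos by (intro ln_le_minus_one) simp
    then show "?p w - ?q w \<le> ?p w * ln (?p w / ?q w)"
      using lik_pos[OF w, of p] lik_pos[OF w, of q]
      by (simp add: ln_div field_simps)
  qed
  moreover have "(\<Sum>w\<in>S v. ?p w) = 1"
    unfolding marg_lik_def using supp \<open>finite (S v)\<close> by (intro sum_pmf_eq_1) auto
  moreover have "(\<Sum>w\<in>S v. ?q w) \<le> 1"
    unfolding marg_lik_def using \<open>finite (S v)\<close>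
    by (metis measure_measure_pmf_finite measure_pmf.prob_le_1)
  ultimately show ?thesis
    by (simp add: sum_subtractf)
qed

lemma AE_PiM_pmf_in_support:
  "AE \<omega> in \<Pi>\<^sub>M i\<in>UNIV. measure_pmf P. \<forall>t::nat. \<omega> t \<in> set_pmf P"
  by (subst AE_all_countable, intro allI AE_PiM_component)
     (auto simp: measure_pmf.prob_space_axioms AE_measure_pmf_iff)

lemma AE_log_lik_average:
  fixes L :: "'h::finite \<Rightarrow> ('v::finite \<Rightarrow> 'sig::finite) pmf"
  assumes supp: "set_pmf (L \<theta>s) \<subseteq> {s. \<forall>i. s i \<in> S i}"
    and lik_pos: "\<And>i \<theta> w. w \<in> S i \<Longrightarrow> marg_lik L i \<theta> w > 0"
  shows "AE \<omega> in \<Pi>\<^sub>M i\<in>UNIV. measure_pmf (L \<theta>s). \<forall>v \<theta>.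
           (\<lambda>t. (\<Sum>s<t. ln (marg_lik L v \<theta>s (\<omega> s v)) - ln (marg_lik L v \<theta> (\<omega> s v))) / real t)
             \<longlonglongrightarrow> KLdiv L S v \<theta>s \<theta>"
proof -
  have "AE \<omega> in \<Pi>\<^sub>M i\<in>UNIV. measure_pmf (L \<theta>s).
          (\<lambda>t. (\<Sum>s<t. ln (marg_lik L v \<theta>s (\<omega> s v)) - ln (marg_lik L v \<theta> (\<omega> s v))) / real t)
            \<longlonglongrightarrow> KLdiv L S v \<theta>s \<theta>" for v \<theta>
  proof -
    define g where "g s = ln (marg_lik L v \<theta>s (s v)) - ln (marg_lik L v \<theta> (s v))" for s
    have "\<bar>g s\<bar> \<le> (\<Sum>s'\<in>UNIV. \<bar>g s'\<bar>)" for s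
      by (rule member_le_sum) auto
    from strong_law_bounded[OF prob_space_measure_pmf _ this]
    have "AE \<omega> in \<Pi>\<^sub>M i\<in>UNIV. measure_pmf (L \<theta>s).
            (\<lambda>t. (\<Sum>s<t. g (\<omega> s)) / real t) \<longlonglongrightarrow> measure_pmf.expectation (L \<theta>s) g"
      by simp
    moreover have "measure_pmf.expectation (L \<theta>s) g = KLdiv L S v \<theta>s \<theta>"
      unfolding g_def using supp lik_pos by (intro KLdiv_eq_expectation) auto
    ultimately show ?thesis
      by (simp add: g_def)
  qed
  then show ?thesis
    by (simp add: AE_all_countable)
qed

lemma AE_learning_path:
  fixes L :: "'h::finite \<Rightarrow> ('v::finite \<Rightarrow> 'sig::finite) pmf"
  assumes supp: "set_pmf (L \<theta>s) \<subseteq> {s. \<forall>i. s i \<in> S i}"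
    and lik_pos: "\<And>i \<theta> w. w \<in> S i \<Longrightarrow> marg_lik L i \<theta> w > 0"
    and pi0_prob: "\<And>i. (\<Sum>\<theta>\<in>UNIV. \<pi>0 i \<theta>) = 1"
    and mu0_prob: "\<And>i. (\<Sum>\<theta>\<in>UNIV. \<mu>0 i \<theta>) = 1"
    and pos0: "\<And>i \<theta>. \<pi>0 i \<theta> > 0 \<and> \<mu>0 i \<theta> > 0"
    and strong: "\<And>i j. (i, j) \<in> E\<^sup>*"
  shows "AE \<omega> in \<Pi>\<^sub>M i\<in>UNIV. measure_pmf (L \<theta>s).
           learning_path L E \<pi>0 \<mu>0 \<omega> \<theta>s (\<lambda>v \<theta>. KLdiv L S v \<theta>s \<theta>)"
proof -
  have averages: "AE \<omega> in \<Pi>\<^sub>M i\<in>UNIV. measure_pmf (L \<theta>s). \<forall>v \<theta>.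
      (\<lambda>t. (\<Sum>s<t. ln (marg_lik L v \<theta>s (\<omega> s v)) - ln (marg_lik L v \<theta> (\<omega> s v))) / real t)
        \<longlonglongrightarrow> KLdiv L S v \<theta>s \<theta>"
    by (rule AE_log_lik_average) (use supp lik_pos in auto)
  show ?thesis
    using AE_PiM_pmf_in_support[of "L \<theta>s"] averages
  proof eventually_elim
    case (elim \<omega>)
    show ?case
    proof unfold_locales
      show "marg_lik L i \<theta> (\<omega> t i) > 0" for t i \<theta>
        using elim(1) supp lik_pos by blast
      show "KLdiv L S v \<theta>s \<theta> \<ge> 0" for v \<theta>
        using supp lik_pos by (intro KLdiv_nonneg) auto
    qed (use elim(2) pi0_prob mu0_prob pos0 strong in auto)
  qed
qed

theorem corollary1:
  fixes L :: "'h::finite \<Rightarrow> ('v::finite \<Rightarrow> 'sig::finite) pmf"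
    and S :: "'v \<Rightarrow> 'sig set"
    and E :: "('v \<times> 'v) set"
    and \<theta>s :: 'h
    and \<pi>0 \<mu>0 :: "'v \<Rightarrow> 'h \<Rightarrow> real"
  assumes supp: "\<And>\<theta>. set_pmf (L \<theta>) \<subseteq> {s. \<forall>i. s i \<in> S i}"
    and lik_pos: "\<And>i \<theta> w. w \<in> S i \<Longrightarrow> marg_lik L i \<theta> w > 0"
    and pi0_prob: "\<And>i. (\<Sum>\<theta>\<in>UNIV. \<pi>0 i \<theta>) = 1"
    and mu0_prob: "\<And>i. (\<Sum>\<theta>\<in>UNIV. \<mu>0 i \<theta>) = 1"
    and ident: "\<And>p q. p \<noteq> q \<Longrightarrow> informative_agents L S p q \<noteq> {}"
    and strong: "\<And>i j. (i, j) \<in> E\<^sup>*"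
    and pos0: "\<And>i \<theta>. \<pi>0 i \<theta> > 0 \<and> \<mu>0 i \<theta> > 0"
  shows "(\<forall>i. AE \<omega> in PiM UNIV (\<lambda>_::nat. measure_pmf (L \<theta>s)).
              (\<lambda>t. mu_belief L E \<pi>0 \<mu>0 \<omega> t i \<theta>s) \<longlonglongrightarrow> 1)
       \<and> (\<forall>i \<theta>. \<theta> \<noteq> \<theta>s \<longrightarrow>
            (AE \<omega> in PiM UNIV (\<lambda>_::nat. measure_pmf (L \<theta>s)).
              Liminf sequentially (\<lambda>t. ereal (- ln (mu_belief L E \<pi>0 \<mu>0 \<omega> t i \<theta>) / real t))
                \<ge> ereal (Max ((\<lambda>v. KLdiv L S v \<theta>s \<theta>) ` informative_agents L S \<theta>s \<theta>))))"
proof -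
  let ?M = "\<Pi>\<^sub>M i\<in>UNIV. measure_pmf (L \<theta>s)"
  have "AE \<omega> in ?M. learning_path L E \<pi>0 \<mu>0 \<omega> \<theta>s (\<lambda>v \<theta>. KLdiv L S v \<theta>s \<theta>)"
    by (rule AE_learning_path) (use assms in auto)
  then have paths: "AE \<omega> in ?M. (\<forall>i. (\<lambda>t. mu_belief L E \<pi>0 \<mu>0 \<omega> t i \<theta>s) \<longlonglongrightarrow> 1) \<and>
      (\<forall>i \<theta> v. ereal (KLdiv L S v \<theta>s \<theta>)
                  \<le> Liminf sequentially (\<lambda>t. ereal (- ln (mu_belief L E \<pi>0 \<mu>0 \<omega> t i \<theta>) / real t)))"
  proof eventually_elim
    case (elim \<omega>)
    interpret learning_path L E \<pi>0 \<mu>0 \<omega> \<theta>s "\<lambda>v \<theta>. KLdiv L S v \<theta>s \<theta>"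
      by (fact elim)
    have "\<exists>v. KLdiv L S v \<theta>s \<theta> > 0" if "\<theta> \<noteq> \<theta>s" for \<theta>
      using ident[of \<theta>s \<theta>] that by (auto simp: informative_agents_def)
    then show ?case
      using mu_belief_true_tendsto_1 liminf_neg_ln_mu_belief by blast
  qed
  show ?thesis
  proof (intro conjI allI impI)
    show "AE \<omega> in ?M. (\<lambda>t. mu_belief L E \<pi>0 \<mu>0 \<omega> t i \<theta>s) \<longlonglongrightarrow> 1" for i
      using paths by eventually_elim blast
    fix i \<theta> assume "\<theta> \<noteq> \<theta>s"
    then obtain v where v: "Max ((\<lambda>v. KLdiv L S v \<theta>s \<theta>) ` informative_agents L S \<theta>s \<theta>) = KLdiv L S v \<theta>s \<theta>"
      using ident Max_in[of "(\<lambda>v. KLdiv L S v \<theta>s \<theta>) ` informative_agents L S \<theta>s \<theta>"] by fastforce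
    show "AE \<omega> in ?M. Liminf sequentially (\<lambda>t. ereal (- ln (mu_belief L E \<pi>0 \<mu>0 \<omega> t i \<theta>) / real t))
            \<ge> ereal (Max ((\<lambda>v. KLdiv L S v \<theta>s \<theta>) ` informative_agents L S \<theta>s \<theta>))"
      using paths by eventually_elim (simp add: v)
  qed
qed

end
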